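(* Let $\mathbf{A}\in\mathbb{C}^{M\times N_a}$ and $\mathbf{B}\in\mathbb{C}^{M\times N_b}$ have unit-$\ell_2$-norm columns, let $\mathbf{D}=[\mathbf{A}\ \mathbf{B}]$ with coherence parameters $\mu_a,\mu_b,\mu_m$ and $\mu_d=\max\{\mu_a,\mu_b,\mu_m\}$, and assume $\mu_b\le\mu_a$. For each integer $w\ge1$ let $\delta_w$ be the smallest number such that $(1-\delta_w)\|\mathbf{w}\|_2^2\le\|\mathbf{D}\mathbf{w}\|_2^2\le(1+\delta_w)\|\mathbf{w}\|_2^2$ for all $\mathbf{w}\in\mathbb{C}^{N_a+N_b}$ with at most $w$ nonzero entries. Then $$\delta_w\le\min\left\{\frac12\Big(\mu_a(w-2)+w\sqrt{\mu_a^2+\mu_m^2}\Big),\ \mu_d(w-1)\right\}.$$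
   Context: Coherence parameters: $\mu_a=\max_{k\ne\ell}|\mathbf{a}_k^H\mathbf{a}_\ell|$, $\mu_b=\max_{k\ne\ell}|\mathbf{b}_k^H\mathbf{b}_\ell|$, $\mu_m=\max_{k,\ell}|\mathbf{a}_k^H\mathbf{b}_\ell|$, where $\mathbf{a}_k,\mathbf{b}_\ell$ are the columns of $\mathbf{A},\mathbf{B}$. *)

theory Defs
  imports Complex_Main
begin

text \<open>Matrices are represented as functions nat \<Rightarrow> nat \<Rightarrow> complex (row index, column index);
  only entries with row < M and column < number of columns matter.\<close>

definition inner_col :: "nat \<Rightarrow> (nat \<Rightarrow> nat \<Rightarrow> complex) \<Rightarrow> nat \<Rightarrow> (nat \<Rightarrow> nat \<Rightarrow> complex) \<Rightarrow> nat \<Rightarrow> complex" where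
  "inner_col M X k Y l = (\<Sum>i<M. cnj (X i k) * Y i l)"

definition unit_cols :: "nat \<Rightarrow> nat \<Rightarrow> (nat \<Rightarrow> nat \<Rightarrow> complex) \<Rightarrow> bool" where
  "unit_cols M N X \<longleftrightarrow> (\<forall>k<N. (\<Sum>i<M. (cmod (X i k))\<^sup>2) = 1)"

text \<open>Coherence parameters (maximum over an empty index set is taken to be 0).\<close>
definition mu_self :: "nat \<Rightarrow> nat \<Rightarrow> (nat \<Rightarrow> nat \<Rightarrow> complex) \<Rightarrow> real" where
  "mu_self M N X = Max (insert 0 {cmod (inner_col M X k X l) | k l. k < N \<and> l < N \<and> k \<noteq> l})"

definition mu_mutual :: "nat \<Rightarrow> nat \<Rightarrow> nat \<Rightarrow> (nat \<Rightarrow> nat \<Rightarrow> complex) \<Rightarrow> (nat \<Rightarrow> nat \<Rightarrow> complex) \<Rightarrow> real" where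
  "mu_mutual M Na Nb A B = Max (insert 0 {cmod (inner_col M A k B l) | k l. k < Na \<and> l < Nb})"

definition concat_mat :: "nat \<Rightarrow> (nat \<Rightarrow> nat \<Rightarrow> complex) \<Rightarrow> (nat \<Rightarrow> nat \<Rightarrow> complex) \<Rightarrow> nat \<Rightarrow> nat \<Rightarrow> complex" where
  "concat_mat Na A B = (\<lambda>i j. if j < Na then A i j else B i (j - Na))"

definition vnorm2 :: "nat \<Rightarrow> (nat \<Rightarrow> complex) \<Rightarrow> real" where
  "vnorm2 N v = (\<Sum>j<N. (cmod (v j))\<^sup>2)"

definition mat_vec :: "nat \<Rightarrow> nat \<Rightarrow> (nat \<Rightarrow> nat \<Rightarrow> complex) \<Rightarrow> (nat \<Rightarrow> complex) \<Rightarrow> nat \<Rightarrow> complex" where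
  "mat_vec M N X v = (\<lambda>i. \<Sum>j<N. X i j * v j)"

definition sparse :: "nat \<Rightarrow> nat \<Rightarrow> (nat \<Rightarrow> complex) \<Rightarrow> bool" where
  "sparse N s v \<longleftrightarrow> card {j. j < N \<and> v j \<noteq> 0} \<le> s"

definition ric :: "nat \<Rightarrow> nat \<Rightarrow> (nat \<Rightarrow> nat \<Rightarrow> complex) \<Rightarrow> nat \<Rightarrow> real" where
  "ric M N X s = Inf {d. \<forall>v. sparse N s v \<longrightarrow>
      (1 - d) * vnorm2 N v \<le> vnorm2 M (mat_vec M N X v) \<and>
      vnorm2 M (mat_vec M N X v) \<le> (1 + d) * vnorm2 N v}"

end

theory Submission
  imports Defs "HOL-Analysis.Convex"
begin

(*
  For a matrix X with unit-norm columns and Gram entries G j k = <x_j, x_k>, the quadratic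
  form of a vector v satisfies
      |(\<parallel>Xv\<parallel>^2 - \<parallel>v\<parallel>^2)| \<le> \<Sum>_{j \<noteq> k} |v_j| |v_k| |G j k|,
  because the diagonal of the Gram matrix is identically one.  Bounding |G j k| entrywise by
  a coherence profile c j k turns the right-hand side into a real quadratic form in |v|.

  (1) With the constant profile \<mu>_d one gets \<mu>_d ((\<Sum>|v_j|)^2 - \<Sum>|v_j|^2), and Cauchy-Schwarz on
      the support of an s-sparse v bounds this by \<mu>_d (s-1) \<parallel>v\<parallel>^2.
  (2) With the block profile (\<mu>_a on A\<times>A, \<mu>_b on B\<times>B, \<mu>_m across) the form equals
      \<mu>_a(F_a^2-Q_a) + \<mu>_b(F_b^2-Q_b) + 2\<mu>_m F_a F_b, where F, Q are the l1-mass and squared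
      l2-mass of v on the two blocks.  A scalar argument (Cauchy-Schwarz in R^2 plus AM-GM on the
      block supports p + q \<le> w) bounds it by (\<mu>_a(w-2) + w sqrt(\<mu>_a^2+\<mu>_m^2))/2 \<parallel>v\<parallel>^2.
*)

section \<open>Scalar inequalities\<close>

lemma sum_square_le_support_card:
  fixes f :: "'a \<Rightarrow> real"
  assumes "finite S"
  shows "(sum f S)\<^sup>2 \<le> real (card {j\<in>S. f j \<noteq> 0}) * (\<Sum>j\<in>S. (f j)\<^sup>2)"
proof -
  let ?T = "{j\<in>S. f j \<noteq> 0}"
  have "sum f S = sum f ?T" "(\<Sum>j\<in>S. (f j)\<^sup>2) = (\<Sum>j\<in>?T. (f j)\<^sup>2)"
    by (rule sum.mono_neutral_right; use assms in auto)+
  moreover have "(\<Sum>j\<in>?T. 1 * f j)\<^sup>2 \<le> (\<Sum>j\<in>?T. 1\<^sup>2) * (\<Sum>j\<in>?T. (f j)\<^sup>2)"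
    by (rule Cauchy_Schwarz_ineq_sum)
  ultimately show ?thesis by simp
qed

lemma sum_squares_le_square_sum:
  fixes f :: "'a \<Rightarrow> real"
  assumes "finite S" "\<And>j. j \<in> S \<Longrightarrow> f j \<ge> 0"
  shows "(\<Sum>j\<in>S. (f j)\<^sup>2) \<le> (sum f S)\<^sup>2"
proof -
  have "(\<Sum>j\<in>S. (f j)\<^sup>2) = (\<Sum>j\<in>S. f j * f j)" by (simp add: power2_eq_square)
  also have "\<dots> \<le> (\<Sum>j\<in>S. f j * sum f S)"
    by (intro sum_mono mult_left_mono member_le_sum) (use assms in auto)
  also have "\<dots> = (sum f S)\<^sup>2" by (simp add: power2_eq_square sum_distrib_right)
  finally show ?thesis .
qed

lemma cauchy_schwarz_plane:
  fixes a b x y :: real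
  shows "a * x + b * y \<le> sqrt (a\<^sup>2 + b\<^sup>2) * sqrt (x\<^sup>2 + y\<^sup>2)"
proof -
  have "(a * x + b * y)\<^sup>2 + (a * y - b * x)\<^sup>2 = (a\<^sup>2 + b\<^sup>2) * (x\<^sup>2 + y\<^sup>2)"
    by (simp add: power2_eq_square algebra_simps)
  then have "(a * x + b * y)\<^sup>2 \<le> (a\<^sup>2 + b\<^sup>2) * (x\<^sup>2 + y\<^sup>2)"
    by (metis le_add_same_cancel1 zero_le_power2)
  then have "a * x + b * y \<le> sqrt ((a\<^sup>2 + b\<^sup>2) * (x\<^sup>2 + y\<^sup>2))"
    by (rule real_le_rsqrt)
  then show ?thesis by (simp add: real_sqrt_mult)
qed

text \<open>The cross term is controlled by Cauchy-Schwarz in the plane applied to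
  (\<mu>_a(p-q)/2, \<mu>_m sqrt(pq)) and (Q_a - Q_b, 2 sqrt(Q_a Q_b)), whose second vector has
  length Q_a + Q_b.\<close>
lemma two_block_core:
  fixes ma mm p q Qa Qb :: real
  assumes "0 \<le> p" "0 \<le> q" "0 \<le> Qa" "0 \<le> Qb"
  shows "ma * (p - 1) * Qa + ma * (q - 1) * Qb + 2 * mm * sqrt (p * q) * sqrt (Qa * Qb)
         \<le> (ma * (p + q - 2) + (p + q) * sqrt (ma\<^sup>2 + mm\<^sup>2)) / 2 * (Qa + Qb)"
proof -
  define al where "al = ma * (p - q) / 2"
  define be where "be = mm * sqrt (p * q)"
  have len: "sqrt ((Qa - Qb)\<^sup>2 + (2 * sqrt (Qa * Qb))\<^sup>2) = Qa + Qb"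
  proof -
    have "(Qa - Qb)\<^sup>2 + (2 * sqrt (Qa * Qb))\<^sup>2 = (Qa + Qb)\<^sup>2"
      using assms by (simp add: power_mult_distrib power2_eq_square algebra_simps)
    then show ?thesis using assms by simp
  qed
  have coeff: "al\<^sup>2 + be\<^sup>2 \<le> (ma\<^sup>2 + mm\<^sup>2) * ((p + q) / 2)\<^sup>2"
  proof -
    have amgm: "p * q \<le> ((p + q) / 2)\<^sup>2"
      using sum_squares_bound[of p q] by (simp add: power2_eq_square field_simps)
    have "al\<^sup>2 + be\<^sup>2 = ma\<^sup>2 * ((p - q) / 2)\<^sup>2 + mm\<^sup>2 * (p * q)"
      using assms unfolding al_def be_def by (simp add: power_mult_distrib power_divide)
    also have "\<dots> \<le> ma\<^sup>2 * ((p + q) / 2)\<^sup>2 + mm\<^sup>2 * ((p + q) / 2)\<^sup>2"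
      using amgm assms by (intro add_mono mult_left_mono) (auto simp: power2_eq_square field_simps)
    finally show ?thesis by (simp add: algebra_simps)
  qed
  have "ma * (p - 1) * Qa + ma * (q - 1) * Qb + 2 * mm * sqrt (p * q) * sqrt (Qa * Qb)
        = ma * (p + q - 2) / 2 * (Qa + Qb) + (al * (Qa - Qb) + be * (2 * sqrt (Qa * Qb)))"
    unfolding al_def be_def by (simp add: field_simps)
  also have "\<dots> \<le> ma * (p + q - 2) / 2 * (Qa + Qb) + sqrt (al\<^sup>2 + be\<^sup>2) * (Qa + Qb)"
    using cauchy_schwarz_plane[of al "Qa - Qb" be "2 * sqrt (Qa * Qb)"] len by simp
  also have "\<dots> \<le> ma * (p + q - 2) / 2 * (Qa + Qb) + sqrt (ma\<^sup>2 + mm\<^sup>2) * ((p + q) / 2) * (Qa + Qb)"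
    using real_sqrt_le_mono[OF coeff] assms by (intro add_left_mono mult_right_mono) (auto simp: real_sqrt_mult)
  finally show ?thesis by (simp add: field_simps)
qed

text \<open>The two-block estimate in terms of the block masses: F_a, F_b are the l1-masses and
  Q_a, Q_b the squared l2-masses of |v| on the blocks, supported on p and q entries.\<close>
lemma two_block_bound:
  fixes ma mb mm Fa Fb Qa Qb :: real and p q w :: nat
  assumes "0 \<le> mb" "mb \<le> ma" "0 \<le> mm" "0 \<le> Fa" "0 \<le> Fb" "0 \<le> Qa" "0 \<le> Qb"
    and "Fa\<^sup>2 \<le> p * Qa" "Fb\<^sup>2 \<le> q * Qb" "Qa \<le> Fa\<^sup>2" "Qb \<le> Fb\<^sup>2" "p + q \<le> w"
  shows "ma * (Fa\<^sup>2 - Qa) + mb * (Fb\<^sup>2 - Qb) + 2 * mm * Fa * Fb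
         \<le> (ma * (real w - 2) + real w * sqrt (ma\<^sup>2 + mm\<^sup>2)) / 2 * (Qa + Qb)"
proof -
  have a: "ma * (Fa\<^sup>2 - Qa) \<le> ma * (real p - 1) * Qa"
  proof -
    have "Fa\<^sup>2 - Qa \<le> (real p - 1) * Qa" using assms(8) by (simp add: algebra_simps)
    then show ?thesis using assms(1,2) by (simp add: mult.assoc mult_left_mono)
  qed
  have b: "mb * (Fb\<^sup>2 - Qb) \<le> ma * (real q - 1) * Qb"
  proof -
    have "0 \<le> Fb\<^sup>2 - Qb" "Fb\<^sup>2 - Qb \<le> (real q - 1) * Qb"
      using assms by (auto simp: algebra_simps)
    then show ?thesis
      using assms by (metis mult.assoc mult_mono order_trans)
  qed
  have c: "Fa * Fb \<le> sqrt (real p * real q) * sqrt (Qa * Qb)"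
  proof -
    have "Fa * Fb \<le> sqrt (real p * Qa) * sqrt (real q * Qb)"
      using assms by (intro mult_mono real_le_rsqrt) auto
    then show ?thesis by (simp add: real_sqrt_mult mult_ac)
  qed
  have "ma * (Fa\<^sup>2 - Qa) + mb * (Fb\<^sup>2 - Qb) + 2 * mm * Fa * Fb
        \<le> ma * (real p - 1) * Qa + ma * (real q - 1) * Qb
          + 2 * mm * sqrt (real p * real q) * sqrt (Qa * Qb)"
    using a b c assms(3) by (simp add: mult.assoc mult_left_mono add_mono)
  also have "\<dots> \<le> (ma * (real p + real q - 2) + (real p + real q) * sqrt (ma\<^sup>2 + mm\<^sup>2)) / 2 * (Qa + Qb)"
    using assms(6,7) by (intro two_block_core) auto
  also have "\<dots> \<le> (ma * (real w - 2) + real w * sqrt (ma\<^sup>2 + mm\<^sup>2)) / 2 * (Qa + Qb)"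
  proof -
    have "ma \<le> sqrt (ma\<^sup>2 + mm\<^sup>2)" "real p + real q \<le> real w"
      using assms(12) by simp_all
    then have "(ma + sqrt (ma\<^sup>2 + mm\<^sup>2)) * (real p + real q) \<le> (ma + sqrt (ma\<^sup>2 + mm\<^sup>2)) * real w"
      using assms(1,2) by (intro mult_left_mono) auto
    then have "ma * (real p + real q - 2) + (real p + real q) * sqrt (ma\<^sup>2 + mm\<^sup>2)
               \<le> ma * (real w - 2) + real w * sqrt (ma\<^sup>2 + mm\<^sup>2)"
      by (simp add: algebra_simps)
    then show ?thesis
      using assms(6,7) by (intro mult_right_mono divide_right_mono) auto
  qed
  finally show ?thesis .
qed

section \<open>The Gram form of a matrix\<close>

lemma vnorm2_mat_vec_gram:
  "complex_of_real (vnorm2 M (mat_vec M N X v)) =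
     (\<Sum>j<N. \<Sum>k<N. cnj (v j) * v k * inner_col M X j X k)"
proof -
  have "complex_of_real (vnorm2 M (mat_vec M N X v)) =
     (\<Sum>i<M. cnj (\<Sum>j<N. X i j * v j) * (\<Sum>k<N. X i k * v k))"
    unfolding vnorm2_def mat_vec_def of_real_sum
    by (intro sum.cong refl, subst complex_norm_square) (simp add: mult.commute)
  also have "\<dots> = (\<Sum>i<M. \<Sum>j<N. \<Sum>k<N. cnj (v j) * v k * (cnj (X i j) * X i k))"
    unfolding cnj_sum sum_product by (simp add: mult_ac)
  also have "\<dots> = (\<Sum>j<N. \<Sum>k<N. \<Sum>i<M. cnj (v j) * v k * (cnj (X i j) * X i k))"
    by (subst sum.swap) (simp add: sum.swap[of _ "{..<M}"])
  also have "\<dots> = (\<Sum>j<N. \<Sum>k<N. cnj (v j) * v k * inner_col M X j X k)"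
    by (simp add: inner_col_def sum_distrib_left)
  finally show ?thesis .
qed

lemma inner_col_unit:
  assumes "unit_cols M N X" "j < N"
  shows "inner_col M X j X j = 1"
proof -
  have "inner_col M X j X j = complex_of_real (\<Sum>i<M. (cmod (X i j))\<^sup>2)"
    unfolding inner_col_def of_real_sum
    by (intro sum.cong refl, subst complex_norm_square) (simp add: mult.commute)
  with assms show ?thesis unfolding unit_cols_def by simp
qed

text \<open>With unit-norm columns the diagonal of the Gram form reproduces \<parallel>v\<parallel>^2, so the
  deviation from an isometry is controlled by the off-diagonal Gram entries, here bounded
  entrywise by a profile c.\<close>
lemma deviation_le_offdiag:
  assumes "unit_cols M N X"
    and "\<And>j k. j < N \<Longrightarrow> k < N \<Longrightarrow> j \<noteq> k \<Longrightarrow> cmod (inner_col M X j X k) \<le> c j k"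
  shows "\<bar>vnorm2 M (mat_vec M N X v) - vnorm2 N v\<bar> \<le>
    (\<Sum>j<N. \<Sum>k\<in>{..<N}-{j}. cmod (v j) * cmod (v k) * c j k)"
proof -
  define E where "E = (\<Sum>j<N. \<Sum>k\<in>{..<N}-{j}. cnj (v j) * v k * inner_col M X j X k)"
  have diag: "cnj (v j) * v j * inner_col M X j X j = complex_of_real ((cmod (v j))\<^sup>2)"
    if "j < N" for j
    using inner_col_unit[OF assms(1) that] by (subst complex_norm_square) (simp add: mult.commute)
  have "complex_of_real (vnorm2 M (mat_vec M N X v)) =
     (\<Sum>j<N. cnj (v j) * v j * inner_col M X j X j) + E"
    unfolding vnorm2_mat_vec_gram E_def sum.distrib[symmetric]
    by (intro sum.cong refl) (simp add: sum.remove)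
  also have "(\<Sum>j<N. cnj (v j) * v j * inner_col M X j X j) = complex_of_real (vnorm2 N v)"
    unfolding vnorm2_def of_real_sum using diag by simp
  finally have "\<bar>vnorm2 M (mat_vec M N X v) - vnorm2 N v\<bar> = cmod E"
    by (metis add_diff_cancel_left' norm_of_real of_real_diff)
  also have "\<dots> \<le> (\<Sum>j<N. \<Sum>k\<in>{..<N}-{j}. cmod (cnj (v j) * v k * inner_col M X j X k))"
    unfolding E_def by (intro order_trans[OF norm_sum] sum_mono norm_sum)
  also have "\<dots> \<le> (\<Sum>j<N. \<Sum>k\<in>{..<N}-{j}. cmod (v j) * cmod (v k) * c j k)"
    unfolding norm_mult complex_mod_cnj using assms(2) by (intro sum_mono mult_left_mono) auto
  finally show ?thesis .
qed

lemma sum_offdiag: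
  fixes g :: "'a \<Rightarrow> 'a \<Rightarrow> real"
  assumes "finite S"
  shows "(\<Sum>j\<in>S. \<Sum>k\<in>S-{j}. g j k) = (\<Sum>j\<in>S. \<Sum>k\<in>S. g j k) - (\<Sum>j\<in>S. g j j)"
proof -
  have "(\<Sum>j\<in>S. \<Sum>k\<in>S. g j k) = (\<Sum>j\<in>S. g j j + (\<Sum>k\<in>S-{j}. g j k))"
    using assms by (intro sum.cong refl) (simp add: sum.remove)
  then show ?thesis by (simp add: sum.distrib)
qed

lemma sum_block_const:
  fixes f :: "'a \<Rightarrow> real"
  assumes "\<And>j k. j \<in> S \<Longrightarrow> k \<in> T \<Longrightarrow> c j k = m"
  shows "(\<Sum>j\<in>S. \<Sum>k\<in>T. f j * f k * c j k) = m * sum f S * sum f T"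
proof -
  have "(\<Sum>j\<in>S. \<Sum>k\<in>T. f j * f k * c j k) = (\<Sum>j\<in>S. \<Sum>k\<in>T. m * (f j * f k))"
    using assms by (intro sum.cong refl) (simp add: mult_ac)
  then show ?thesis by (simp add: sum_distrib_left sum_product mult_ac)
qed

lemma deviation_uniform_coherence:
  assumes "unit_cols M N X" "0 \<le> \<mu>" "sparse N s v"
    and "\<And>j k. j < N \<Longrightarrow> k < N \<Longrightarrow> j \<noteq> k \<Longrightarrow> cmod (inner_col M X j X k) \<le> \<mu>"
  shows "\<bar>vnorm2 M (mat_vec M N X v) - vnorm2 N v\<bar> \<le> \<mu> * (real s - 1) * vnorm2 N v"
proof -
  define f where "f j = cmod (v j)" for j
  have norm: "vnorm2 N v = (\<Sum>j<N. (f j)\<^sup>2)"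
    unfolding vnorm2_def f_def ..
  have "(sum f {..<N})\<^sup>2 \<le> real (card {j\<in>{..<N}. f j \<noteq> 0}) * (\<Sum>j<N. (f j)\<^sup>2)"
    by (rule sum_square_le_support_card) simp
  also have "\<dots> \<le> real s * (\<Sum>j<N. (f j)\<^sup>2)"
    using assms(3) unfolding sparse_def f_def
    by (intro mult_right_mono sum_nonneg) (auto simp: lessThan_def)
  finally have l1: "(sum f {..<N})\<^sup>2 - (\<Sum>j<N. (f j)\<^sup>2) \<le> (real s - 1) * (\<Sum>j<N. (f j)\<^sup>2)"
    by (simp add: algebra_simps)
  have "\<bar>vnorm2 M (mat_vec M N X v) - vnorm2 N v\<bar> \<le>
      (\<Sum>j<N. \<Sum>k\<in>{..<N}-{j}. f j * f k * \<mu>)"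
    unfolding f_def by (rule deviation_le_offdiag[OF assms(1,4)])
  also have "\<dots> = \<mu> * ((sum f {..<N})\<^sup>2 - (\<Sum>j<N. (f j)\<^sup>2))"
    by (simp add: sum_offdiag sum_block_const[where m = \<mu>] power2_eq_square
        right_diff_distrib sum_distrib_left mult_ac)
  also have "\<dots> \<le> \<mu> * (real s - 1) * vnorm2 N v"
    using mult_left_mono[OF l1 assms(2)] by (simp add: norm mult.assoc)
  finally show ?thesis .
qed

section \<open>Coherence of the concatenation [A B]\<close>

lemma sum_lessThan_add_split:
  fixes h :: "nat \<Rightarrow> 'a::comm_monoid_add"
  shows "sum h {..<m + n} = sum h {..<m} + sum h {m..<m + n}"
  using sum.atLeastLessThan_concat[of 0 m "m + n" h] by (simp add: atLeast0LessThan)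

lemma finite_pair_image: "finite {g k l | k l. k < (N::nat) \<and> l < (N'::nat) \<and> P k l}"
proof (rule finite_subset)
  show "{g k l | k l. k < N \<and> l < N' \<and> P k l} \<subseteq> (\<lambda>(k, l). g k l) ` ({..<N} \<times> {..<N'})"
    by auto
qed auto

lemma mu_self_nonneg: "0 \<le> mu_self M N X"
  unfolding mu_self_def by (rule Max_ge) (auto simp: finite_pair_image)

lemma mu_mutual_nonneg: "0 \<le> mu_mutual M Na Nb A B"
  unfolding mu_mutual_def by (rule Max_ge) (auto simp: finite_pair_image[where P = "\<lambda>_ _. True", simplified])

lemma mu_self_ge:
  "k < N \<Longrightarrow> l < N \<Longrightarrow> k \<noteq> l \<Longrightarrow> cmod (inner_col M X k X l) \<le> mu_self M N X"
  unfolding mu_self_def by (rule Max_ge) (auto simp: finite_pair_image)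

lemma mu_mutual_ge:
  "k < Na \<Longrightarrow> l < Nb \<Longrightarrow> cmod (inner_col M A k B l) \<le> mu_mutual M Na Nb A B"
  unfolding mu_mutual_def
  by (rule Max_ge) (auto simp: finite_pair_image[where P = "\<lambda>_ _. True", simplified])

definition coh_profile :: "nat \<Rightarrow> real \<Rightarrow> real \<Rightarrow> real \<Rightarrow> nat \<Rightarrow> nat \<Rightarrow> real" where
  "coh_profile Na ma mb mm j k =
     (if j < Na then (if k < Na then ma else mm) else (if k < Na then mm else mb))"

lemma inner_col_concat:
  "inner_col M (concat_mat Na A B) j (concat_mat Na A B) k =
   (if j < Na then (if k < Na then inner_col M A j A k else inner_col M A j B (k - Na))
    else (if k < Na then cnj (inner_col M A k B (j - Na)) else inner_col M B (j - Na) B (k - Na)))"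
  unfolding inner_col_def concat_mat_def by (auto simp: mult.commute)

lemma unit_cols_concat:
  assumes "unit_cols M Na A" "unit_cols M Nb B"
  shows "unit_cols M (Na + Nb) (concat_mat Na A B)"
  unfolding unit_cols_def
proof (intro allI impI)
  fix k assume "k < Na + Nb"
  then show "(\<Sum>i<M. (cmod (concat_mat Na A B i k))\<^sup>2) = 1"
    using assms unfolding unit_cols_def concat_mat_def
    by (cases "k < Na") (auto dest: spec[where x = "k - Na"])
qed

lemma inner_col_concat_le_profile:
  assumes "j < Na + Nb" "k < Na + Nb" "j \<noteq> k"
  shows "cmod (inner_col M (concat_mat Na A B) j (concat_mat Na A B) k) \<le>
    coh_profile Na (mu_self M Na A) (mu_self M Nb B) (mu_mutual M Na Nb A B) j k"
proof -
  have "j - Na < Nb" if "\<not> j < Na" using assms(1) that by linarith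
  moreover have "k - Na < Nb" if "\<not> k < Na" using assms(2) that by linarith
  moreover have "j - Na \<noteq> k - Na" if "\<not> j < Na" "\<not> k < Na" using assms(3) that by linarith
  ultimately show ?thesis
    unfolding inner_col_concat coh_profile_def using assms
    by (auto intro: mu_self_ge mu_mutual_ge)
qed

lemma offdiag_profile_form:
  fixes f :: "nat \<Rightarrow> real" and Na Nb :: nat and ma mb mm :: real
  defines "Fa \<equiv> \<Sum>j<Na. f j" and "Fb \<equiv> \<Sum>j\<in>{Na..<Na+Nb}. f j"
    and "Qa \<equiv> \<Sum>j<Na. (f j)\<^sup>2" and "Qb \<equiv> \<Sum>j\<in>{Na..<Na+Nb}. (f j)\<^sup>2"
  shows "(\<Sum>j<Na+Nb. \<Sum>k\<in>{..<Na+Nb}-{j}. f j * f k * coh_profile Na ma mb mm j k)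
         = ma * (Fa\<^sup>2 - Qa) + mb * (Fb\<^sup>2 - Qb) + 2 * mm * Fa * Fb"
proof -
  let ?c = "coh_profile Na ma mb mm"
  have "(\<Sum>j<Na+Nb. \<Sum>k<Na+Nb. f j * f k * ?c j k) =
      (\<Sum>j<Na. \<Sum>k<Na. f j * f k * ?c j k) + (\<Sum>j<Na. \<Sum>k\<in>{Na..<Na+Nb}. f j * f k * ?c j k)
    + (\<Sum>j\<in>{Na..<Na+Nb}. \<Sum>k<Na. f j * f k * ?c j k)
    + (\<Sum>j\<in>{Na..<Na+Nb}. \<Sum>k\<in>{Na..<Na+Nb}. f j * f k * ?c j k)"
    by (simp add: sum_lessThan_add_split sum.distrib)
  also have "\<dots> = ma * Fa * Fa + mm * Fa * Fb + mm * Fb * Fa + mb * Fb * Fb"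
    unfolding Fa_def Fb_def by (subst (1 2 3 4) sum_block_const) (auto simp: coh_profile_def)
  finally have full: "(\<Sum>j<Na+Nb. \<Sum>k<Na+Nb. f j * f k * ?c j k) = \<dots>" .
  have "(\<Sum>j<Na+Nb. f j * f j * ?c j j) = ma * Qa + mb * Qb"
    unfolding sum_lessThan_add_split Qa_def Qb_def sum_distrib_left
    by (intro arg_cong2[where f = "(+)"] sum.cong) (auto simp: coh_profile_def power2_eq_square)
  with full show ?thesis
    by (simp add: sum_offdiag power2_eq_square algebra_simps)
qed

lemma deviation_concat_two_block:
  assumes "unit_cols M Na A" "unit_cols M Nb B" "mu_self M Nb B \<le> mu_self M Na A"
    and "sparse (Na + Nb) w v"
  defines "ma \<equiv> mu_self M Na A" and "mm \<equiv> mu_mutual M Na Nb A B"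
  shows "\<bar>vnorm2 M (mat_vec M (Na + Nb) (concat_mat Na A B) v) - vnorm2 (Na + Nb) v\<bar> \<le>
    (1/2) * (ma * (real w - 2) + real w * sqrt (ma\<^sup>2 + mm\<^sup>2)) * vnorm2 (Na + Nb) v"
proof -
  define f where "f j = cmod (v j)" for j
  define Ia where "Ia = {..<Na}"
  define Ib where "Ib = {Na..<Na+Nb}"
  define Fa Fb Qa Qb where "Fa = sum f Ia" "Fb = sum f Ib"
    "Qa = (\<Sum>j\<in>Ia. (f j)\<^sup>2)" "Qb = (\<Sum>j\<in>Ib. (f j)\<^sup>2)"
  define p q where "p = card {j\<in>Ia. f j \<noteq> 0}" "q = card {j\<in>Ib. f j \<noteq> 0}"
  have fin: "finite Ia" "finite Ib" unfolding Ia_def Ib_def by simp_all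
  have norm: "vnorm2 (Na + Nb) v = Qa + Qb"
    unfolding vnorm2_def Fa_Fb_Qa_Qb_def Ia_def Ib_def f_def by (rule sum_lessThan_add_split)
  have "p + q = card ({j\<in>Ia. f j \<noteq> 0} \<union> {j\<in>Ib. f j \<noteq> 0})"
    unfolding p_q_def using fin by (intro card_Un_disjoint[symmetric]) (auto simp: Ia_def Ib_def)
  also have "{j\<in>Ia. f j \<noteq> 0} \<union> {j\<in>Ib. f j \<noteq> 0} = {j. j < Na + Nb \<and> v j \<noteq> 0}"
    unfolding Ia_def Ib_def f_def by auto
  finally have pq: "p + q \<le> w" using assms(4) unfolding sparse_def by simp
  have "\<bar>vnorm2 M (mat_vec M (Na + Nb) (concat_mat Na A B) v) - vnorm2 (Na + Nb) v\<bar> \<le>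
      (\<Sum>j<Na+Nb. \<Sum>k\<in>{..<Na+Nb}-{j}. f j * f k * coh_profile Na ma (mu_self M Nb B) mm j k)"
    unfolding f_def ma_def mm_def
    by (intro deviation_le_offdiag unit_cols_concat assms(1,2) inner_col_concat_le_profile)
  also have "\<dots> = ma * (Fa\<^sup>2 - Qa) + mu_self M Nb B * (Fb\<^sup>2 - Qb) + 2 * mm * Fa * Fb"
    unfolding offdiag_profile_form Fa_Fb_Qa_Qb_def Ia_def Ib_def ..
  also have "\<dots> \<le> (ma * (real w - 2) + real w * sqrt (ma\<^sup>2 + mm\<^sup>2)) / 2 * (Qa + Qb)"
  proof (rule two_block_bound)
    show "Fa\<^sup>2 \<le> real p * Qa" "Fb\<^sup>2 \<le> real q * Qb"
      unfolding Fa_Fb_Qa_Qb_def p_q_def using fin by (simp_all add: sum_square_le_support_card)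
    show "Qa \<le> Fa\<^sup>2" "Qb \<le> Fb\<^sup>2"
      unfolding Fa_Fb_Qa_Qb_def f_def using fin by (simp_all add: sum_squares_le_square_sum)
  qed (use pq assms(3) in \<open>auto simp: ma_def mm_def Fa_Fb_Qa_Qb_def f_def
         mu_self_nonneg mu_mutual_nonneg intro: sum_nonneg\<close>)
  finally show ?thesis by (simp add: norm)
qed

lemma deviation_concat_uniform:
  assumes "unit_cols M Na A" "unit_cols M Nb B" "sparse (Na + Nb) w v"
  defines "md \<equiv> max (mu_self M Na A) (max (mu_self M Nb B) (mu_mutual M Na Nb A B))"
  shows "\<bar>vnorm2 M (mat_vec M (Na + Nb) (concat_mat Na A B) v) - vnorm2 (Na + Nb) v\<bar> \<le>
    md * (real w - 1) * vnorm2 (Na + Nb) v"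
proof (rule deviation_uniform_coherence)
  show "unit_cols M (Na + Nb) (concat_mat Na A B)" using assms(1,2) by (rule unit_cols_concat)
  show "0 \<le> md" unfolding md_def using mu_self_nonneg by (simp add: le_max_iff_disj)
  fix j k assume "j < Na + Nb" "k < Na + Nb" "j \<noteq> k"
  then have "cmod (inner_col M (concat_mat Na A B) j (concat_mat Na A B) k) \<le>
      coh_profile Na (mu_self M Na A) (mu_self M Nb B) (mu_mutual M Na Nb A B) j k"
    by (rule inner_col_concat_le_profile)
  then show "cmod (inner_col M (concat_mat Na A B) j (concat_mat Na A B) k) \<le> md"
    unfolding md_def by (rule order_trans) (auto simp: coh_profile_def)
qed (rule assms(3))

section \<open>From deviation bounds to the restricted isometry constant\<close>

text \<open>The first standard basis vector is 1-sparse with unit norm, and X maps it to its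
  first column, of unit norm; hence every admissible constant is nonnegative.\<close>
lemma ric_admissible_nonneg:
  assumes "0 < N" "1 \<le> s" "unit_cols M N X"
    and "\<forall>v. sparse N s v \<longrightarrow> (1 - d) * vnorm2 N v \<le> vnorm2 M (mat_vec M N X v)"
  shows "0 \<le> d"
proof -
  define e :: "nat \<Rightarrow> complex" where "e j = (if j = 0 then 1 else 0)" for j
  have "{j. j < N \<and> e j \<noteq> 0} = {0}" using assms(1) unfolding e_def by auto
  then have "sparse N s e" unfolding sparse_def using assms(2) by simp
  moreover have "vnorm2 N e = (\<Sum>j<N. if j = 0 then 1 else 0)"
    unfolding vnorm2_def by (intro sum.cong) (auto simp: e_def)
  then have "vnorm2 N e = 1" using assms(1) by simp
  moreover have "mat_vec M N X e = (\<lambda>i. X i 0)"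
    unfolding mat_vec_def e_def using assms(1) by (simp add: if_distrib[of "\<lambda>z. _ * z"] cong: if_cong)
  then have "vnorm2 M (mat_vec M N X e) = 1"
    using assms(1,3) unfolding vnorm2_def unit_cols_def by simp
  ultimately show ?thesis using assms(4) by force
qed

lemma ric_le:
  assumes "0 < N" "1 \<le> s" "unit_cols M N X"
    and "\<And>v. sparse N s v \<Longrightarrow>
      \<bar>vnorm2 M (mat_vec M N X v) - vnorm2 N v\<bar> \<le> b * vnorm2 N v"
  shows "ric M N X s \<le> b"
  unfolding ric_def
proof (rule cInf_lower)
  show "b \<in> {d. \<forall>v. sparse N s v \<longrightarrow>
      (1 - d) * vnorm2 N v \<le> vnorm2 M (mat_vec M N X v) \<and>
      vnorm2 M (mat_vec M N X v) \<le> (1 + d) * vnorm2 N v}"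
    using assms(4) by (auto simp: algebra_simps abs_le_iff)
  show "bdd_below {d. \<forall>v. sparse N s v \<longrightarrow>
      (1 - d) * vnorm2 N v \<le> vnorm2 M (mat_vec M N X v) \<and>
      vnorm2 M (mat_vec M N X v) \<le> (1 + d) * vnorm2 N v}"
    using ric_admissible_nonneg[OF assms(1-3)] by (intro bdd_belowI[where m = 0]) blast
qed

theorem lemma2:
  fixes M Na Nb w :: nat and A B :: "nat \<Rightarrow> nat \<Rightarrow> complex"
  assumes "Na \<ge> 1" and "Nb \<ge> 1" and "w \<ge> 1"
    and "unit_cols M Na A" and "unit_cols M Nb B"
    and "mu_self M Nb B \<le> mu_self M Na A"
  shows "ric M (Na + Nb) (concat_mat Na A B) w \<le>
    min ((1/2) * (mu_self M Na A * (real w - 2) +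
                  real w * sqrt ((mu_self M Na A)\<^sup>2 + (mu_mutual M Na Nb A B)\<^sup>2)))
        (max (mu_self M Na A) (max (mu_self M Nb B) (mu_mutual M Na Nb A B)) * (real w - 1))"
proof -
  have N: "0 < Na + Nb" using assms(1) by simp
  have D: "unit_cols M (Na + Nb) (concat_mat Na A B)"
    using assms(4,5) by (rule unit_cols_concat)
  have "ric M (Na + Nb) (concat_mat Na A B) w \<le>
      (1/2) * (mu_self M Na A * (real w - 2) +
               real w * sqrt ((mu_self M Na A)\<^sup>2 + (mu_mutual M Na Nb A B)\<^sup>2))"
    using N assms(3) D deviation_concat_two_block[OF assms(4-6)] by (rule ric_le)
  moreover have "ric M (Na + Nb) (concat_mat Na A B) w \<le>
      max (mu_self M Na A) (max (mu_self M Nb B) (mu_mutual M Na Nb A B)) * (real w - 1)"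
    using N assms(3) D deviation_concat_uniform[OF assms(4,5)] by (rule ric_le)
  ultimately show ?thesis by simp
qed

end
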